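(* Suppose $\gamma=\lambda/L$ (so that $f_\gamma^\lambda=f_{1/L}$, where $f_{1/L}(z):=\min_yf(y)+\frac L2\|y-z\|^2$). Then for every $z\in\Omega_0$, $$\frac{f(z)-f_*}2\le f_{1/L}(z)-f_*\le f(z)-f_*.$$
   Context: $f:\mathbb{R}^d\to\mathbb{R}$ is closed, twice continuously differentiable with $\inf f=f_*>-\infty$ attained, $\tau$-weakly convex on $\mathbb{R}^d$ with $L\ge2\tau>0$, $\lambda>0$. For $\gamma>0$, $f_\gamma^\lambda(x):=\min_yf(y)+\frac\lambda{2\gamma}\|x-y\|^2$. $x_0\in\mathbb{R}^d$ is fixed, $\Delta:=f_\gamma^\lambda(x_0)-\min f_\gamma^\lambda$, $\Omega_0:=\{x:f_\gamma^\lambda(x)-\min f_\gamma^\lambda\le2\Delta\}$, $R_0=\sqrt{\Delta\gamma/(160\lambda)}$, $\Omega:=\mathrm{conv}(\{x:\exists w\in\Omega_0,\|x-w\|\le R_0\})$, and for all $x,y\in\Omega$: $\|\nabla f(x)-\nabla f(y)\|\le L\|x-y\|$ and $\|\nabla f(x)\|^2\le2L(f(x)-f_* )$. *)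

theory Defs
  imports "HOL-Analysis.Analysis"
begin

definition moreau_env :: "('a::real_normed_vector \<Rightarrow> real) \<Rightarrow> real \<Rightarrow> real \<Rightarrow> 'a \<Rightarrow> real" where
  "moreau_env f gam lam x = (INF y. f y + lam / (2 * gam) * (norm (x - y))\<^sup>2)"

definition weakly_convex :: "('a::real_normed_vector \<Rightarrow> real) \<Rightarrow> real \<Rightarrow> bool" where
  "weakly_convex f tau \<longleftrightarrow> convex_on UNIV (\<lambda>x. f x + tau / 2 * (norm x)\<^sup>2)"

end

theory Submission
  imports Defs
begin

text \<open>Let \<open>p\<close> minimise \<open>f y + L/2 \<parallel>y - z\<parallel>\<^sup>2\<close> (a proximal point of \<open>z\<close>; it exists by coercivity).
  The upper bound is the choice \<open>y = z\<close>. For the lower bound, the envelope does not increase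
  along the segment from \<open>p\<close> to \<open>z\<close>, so this segment lies in \<open>\<Omega>\<^sub>0 \<subseteq> \<Omega>\<close>, where \<open>\<nabla>f\<close> is
  \<open>L\<close>-Lipschitz. The descent lemma gives \<open>f z \<le> f p + \<langle>\<nabla>f p, z - p\<rangle> + L/2 \<parallel>z - p\<parallel>\<^sup>2\<close>, and
  Young's inequality together with \<open>\<parallel>\<nabla>f p\<parallel>\<^sup>2 \<le> 2L (f p - f\<^sub>*)\<close> bounds the middle term by
  \<open>f p - f\<^sub>* + L/2 \<parallel>z - p\<parallel>\<^sup>2\<close>.\<close>

lemma descent_lemma:
  fixes f :: "'a::real_inner \<Rightarrow> real"
  assumes grad: "\<And>x. (f has_derivative (\<lambda>h. grad x \<bullet> h)) (at x)"
    and seg: "closed_segment a b \<subseteq> S"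
    and Lip: "\<And>x y. x \<in> S \<Longrightarrow> y \<in> S \<Longrightarrow> norm (grad x - grad y) \<le> L * norm (x - y)"
  shows "f b \<le> f a + grad a \<bullet> (b - a) + L / 2 * (norm (b - a))\<^sup>2"
proof -
  define u where "u = b - a"
  define \<phi> where "\<phi> t = f (a + t *\<^sub>R u) - t * (grad a \<bullet> u) - L / 2 * t\<^sup>2 * (norm u)\<^sup>2" for t
  have on_seg: "a + t *\<^sub>R u \<in> S" if "0 \<le> t" "t \<le> 1" for t
  proof -
    have "a + t *\<^sub>R u \<in> closed_segment a b"
      unfolding in_segment u_def using that by (intro exI[of _ t]) (simp add: algebra_simps)
    then show ?thesis
      using seg by blast
  qed
  have f_line: "((\<lambda>t. f (a + t *\<^sub>R u)) has_real_derivative grad (a + t *\<^sub>R u) \<bullet> u) (at t)" for t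
  proof -
    have "((\<lambda>t. a + t *\<^sub>R u) has_derivative (\<lambda>h. h *\<^sub>R u)) (at t)"
      by (auto intro!: derivative_eq_intros)
    from has_derivative_compose[OF this grad] show ?thesis
      unfolding has_field_derivative_def by (rule has_derivative_eq_rhs) (auto simp: fun_eq_iff)
  qed
  have "\<phi> 1 \<le> \<phi> 0"
  proof (rule DERIV_nonpos_imp_nonincreasing[of 0 1])
    fix t :: real
    assume t: "0 \<le> t" "t \<le> 1"
    have "(grad (a + t *\<^sub>R u) - grad a) \<bullet> u \<le> norm (grad (a + t *\<^sub>R u) - grad a) * norm u"
      by (rule norm_cauchy_schwarz)
    also have "\<dots> \<le> L * norm ((a + t *\<^sub>R u) - a) * norm u"
      by (rule mult_right_mono[OF Lip]) (use on_seg[of t] on_seg[of 0] t in auto)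
    also have "\<dots> = L * t * (norm u)\<^sup>2"
      using t by (simp add: power2_eq_square)
    finally have "grad (a + t *\<^sub>R u) \<bullet> u - grad a \<bullet> u - L * t * (norm u)\<^sup>2 \<le> 0"
      by (simp add: inner_diff_left)
    moreover have "(\<phi> has_real_derivative
        grad (a + t *\<^sub>R u) \<bullet> u - grad a \<bullet> u - L * t * (norm u)\<^sup>2) (at t)"
      unfolding \<phi>_def by (auto intro!: derivative_eq_intros f_line)
    ultimately show "\<exists>y. (\<phi> has_real_derivative y) (at t) \<and> y \<le> 0"
      by blast
  qed simp
  then show ?thesis
    unfolding \<phi>_def u_def by simp
qed

lemma inner_le_by_gradient_bound:
  fixes g d :: "'a::real_inner"
  assumes "L > 0" and "(norm g)\<^sup>2 \<le> 2 * L * \<delta>"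
  shows "g \<bullet> d \<le> \<delta> + L / 2 * (norm d)\<^sup>2"
proof -
  have "g \<bullet> d \<le> norm g * norm d"
    by (rule norm_cauchy_schwarz)
  also have "\<dots> \<le> (norm g)\<^sup>2 / (2 * L) + L / 2 * (norm d)\<^sup>2"
  proof -
    have "2 * L * (norm g * norm d) \<le> (norm g)\<^sup>2 + L\<^sup>2 * (norm d)\<^sup>2"
      using sum_squares_ge_zero[of "norm g - L * norm d" 0]
      by (simp add: power2_eq_square algebra_simps)
    then show ?thesis
      using \<open>L > 0\<close> by (simp add: field_simps power2_eq_square)
  qed
  also have "(norm g)\<^sup>2 / (2 * L) \<le> \<delta>"
    using assms by (simp add: field_simps)
  finally show ?thesis
    by simp
qed

lemma moreau_env_eq_INF:
  assumes "lam > 0" and "L > 0"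
  shows "moreau_env f (lam / L) lam x = (INF y. f y + L / 2 * (norm (y - x))\<^sup>2)"
  using assms unfolding moreau_env_def by (simp add: norm_minus_commute)

lemma bdd_below_prox_objective:
  assumes "\<And>y. m \<le> f y" and "0 \<le> c"
  shows "bdd_below (range (\<lambda>y. f y + c * (norm (y - x))\<^sup>2))"
  by (rule bdd_belowI2[of _ m]) (use assms in \<open>auto intro: add_increasing2\<close>)

lemma prox_INF_ge:
  assumes "\<And>y. m \<le> f y" and "0 \<le> c"
  shows "m \<le> (INF y. f y + c * (norm (y - x))\<^sup>2)"
  by (rule cINF_greatest) (use assms in \<open>auto intro: add_increasing2\<close>)

lemma prox_minimizer_exists:
  fixes f :: "'a::euclidean_space \<Rightarrow> real"
  assumes cont: "continuous_on UNIV f" and f_ge: "\<And>y. m \<le> f y" and "c > 0"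
  obtains p where "\<And>y. f p + c * (norm (p - x))\<^sup>2 \<le> f y + c * (norm (y - x))\<^sup>2"
proof -
  define h where "h y = f y + c * (norm (y - x))\<^sup>2" for y
  define R where "R = sqrt ((f x - m) / c)"
  have "R \<ge> 0"
    unfolding R_def using f_ge[of x] \<open>c > 0\<close> by simp
  have "continuous_on (cball x R) h"
    unfolding h_def by (intro continuous_intros continuous_on_subset[OF cont]) auto
  then obtain p where "p \<in> cball x R" and p_min: "\<And>y. y \<in> cball x R \<Longrightarrow> h p \<le> h y"
    using continuous_attains_inf[OF compact_cball] \<open>R \<ge> 0\<close> by (metis cball_eq_empty not_less)
  have "h p \<le> h y" for y
  proof (cases "y \<in> cball x R")
    case False
    then have "R\<^sup>2 \<le> (norm (y - x))\<^sup>2"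
      using \<open>R \<ge> 0\<close> by (intro power_mono) (auto simp: dist_norm norm_minus_commute)
    moreover have "R\<^sup>2 = (f x - m) / c"
      unfolding R_def using f_ge[of x] \<open>c > 0\<close> by simp
    ultimately have "h x \<le> h y"
      unfolding h_def using f_ge[of y] \<open>c > 0\<close> by (simp add: field_simps)
    moreover have "h p \<le> h x"
      using p_min \<open>R \<ge> 0\<close> by simp
    ultimately show ?thesis
      by simp
  qed (rule p_min)
  then show ?thesis
    using that unfolding h_def by blast
qed

lemma prox_INF_eq_minimum:
  assumes "\<And>y. f p + c * (norm (p - x))\<^sup>2 \<le> f y + c * (norm (y - x))\<^sup>2"
  shows "(INF y. f y + c * (norm (y - x))\<^sup>2) = f p + c * (norm (p - x))\<^sup>2"
  by (rule cInf_eq_minimum) (use assms in auto)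

text \<open>The proximal point \<open>p\<close> of \<open>x\<close> is at least as close to every point of the segment
  from \<open>p\<close> to \<open>x\<close>, which bounds the envelope there.\<close>

lemma prox_INF_le_on_segment:
  assumes p: "\<And>y. f p + c * (norm (p - x))\<^sup>2 \<le> f y + c * (norm (y - x))\<^sup>2"
    and f_ge: "\<And>y. m \<le> f y" and "0 \<le> c" and w: "w \<in> closed_segment p x"
  shows "(INF y. f y + c * (norm (y - w))\<^sup>2) \<le> (INF y. f y + c * (norm (y - x))\<^sup>2)"
proof -
  have "(INF y. f y + c * (norm (y - w))\<^sup>2) \<le> f p + c * (norm (p - w))\<^sup>2"
    by (rule cINF_lower[OF bdd_below_prox_objective[OF f_ge \<open>0 \<le> c\<close>]]) simp
  also have "\<dots> \<le> f p + c * (norm (p - x))\<^sup>2"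
    using segment_bound1[OF w] \<open>0 \<le> c\<close>
    by (intro add_left_mono mult_left_mono power_mono) (auto simp: norm_minus_commute)
  finally show ?thesis
    unfolding prox_INF_eq_minimum[OF p] .
qed

lemma subset_hull_thickening:
  assumes "0 \<le> r"
  shows "A \<subseteq> convex hull {x. \<exists>w\<in>A. norm (x - w) \<le> r}"
  using assms by (auto intro!: hull_inc bexI)

theorem lemma15:
  fixes f :: "'a::euclidean_space \<Rightarrow> real"
    and grad :: "'a \<Rightarrow> 'a"
    and H :: "'a \<Rightarrow> 'a \<Rightarrow>\<^sub>L 'a"
    and tau L lam gam :: real
    and x0 z :: 'a
  assumes grad: "\<And>x. (f has_derivative (\<lambda>h. grad x \<bullet> h)) (at x)"
    and hess: "\<And>x. (grad has_derivative blinfun_apply (H x)) (at x)"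
    and hess_cont: "continuous_on UNIV H"
    and attained: "\<exists>xs. \<forall>y. f xs \<le> f y"
    and wc: "weakly_convex f tau"
    and tau_pos: "tau > 0" and L_ge: "L \<ge> 2 * tau" and lam_pos: "lam > 0"
    and gam_def: "gam = lam / L"
    and Lip: "\<And>x y. x \<in> convex hull {x. \<exists>w \<in> {v. moreau_env f gam lam v - Inf (range (moreau_env f gam lam))
                   \<le> 2 * (moreau_env f gam lam x0 - Inf (range (moreau_env f gam lam)))}.
                   norm (x - w) \<le> sqrt ((moreau_env f gam lam x0 - Inf (range (moreau_env f gam lam))) * gam / (160 * lam))}
            \<Longrightarrow> y \<in> convex hull {x. \<exists>w \<in> {v. moreau_env f gam lam v - Inf (range (moreau_env f gam lam))
                   \<le> 2 * (moreau_env f gam lam x0 - Inf (range (moreau_env f gam lam)))}.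
                   norm (x - w) \<le> sqrt ((moreau_env f gam lam x0 - Inf (range (moreau_env f gam lam))) * gam / (160 * lam))}
            \<Longrightarrow> norm (grad x - grad y) \<le> L * norm (x - y)"
    and gradbd: "\<And>x. x \<in> convex hull {x. \<exists>w \<in> {v. moreau_env f gam lam v - Inf (range (moreau_env f gam lam))
                   \<le> 2 * (moreau_env f gam lam x0 - Inf (range (moreau_env f gam lam)))}.
                   norm (x - w) \<le> sqrt ((moreau_env f gam lam x0 - Inf (range (moreau_env f gam lam))) * gam / (160 * lam))}
            \<Longrightarrow> (norm (grad x))\<^sup>2 \<le> 2 * L * (f x - Inf (range f))"
    and z_in: "moreau_env f gam lam z - Inf (range (moreau_env f gam lam))
                   \<le> 2 * (moreau_env f gam lam x0 - Inf (range (moreau_env f gam lam)))"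
  shows "(f z - Inf (range f)) / 2 \<le> (INF y. f y + L / 2 * (norm (y - z))\<^sup>2) - Inf (range f)
       \<and> (INF y. f y + L / 2 * (norm (y - z))\<^sup>2) - Inf (range f) \<le> f z - Inf (range f)"
proof -
  define m where "m = Inf (range f)"
  define E where "E = moreau_env f gam lam"
  define \<Omega>\<^sub>0 where "\<Omega>\<^sub>0 = {v. E v - Inf (range E) \<le> 2 * (E x0 - Inf (range E))}"
  define \<Omega> where "\<Omega> = convex hull {x. \<exists>w\<in>\<Omega>\<^sub>0. norm (x - w) \<le> sqrt ((E x0 - Inf (range E)) * gam / (160 * lam))}"
  note Lip_\<Omega> = Lip[folded E_def, folded \<Omega>\<^sub>0_def, folded \<Omega>_def]
    and gradbd_\<Omega> = gradbd[folded E_def, folded \<Omega>\<^sub>0_def, folded \<Omega>_def, folded m_def]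
  have L_pos: "L > 0"
    using tau_pos L_ge by linarith
  have f_ge: "m \<le> f y" for y
    using attained unfolding m_def by (auto intro!: cInf_lower bdd_belowI2)
  have E_eq: "E x = (INF y. f y + L / 2 * (norm (y - x))\<^sup>2)" for x
    unfolding E_def gam_def using moreau_env_eq_INF[OF lam_pos L_pos] .
  have f_cont: "continuous_on UNIV f"
    using grad by (meson has_derivative_continuous continuous_at_imp_continuous_on)
  obtain p where p: "\<And>y. f p + L / 2 * (norm (p - z))\<^sup>2 \<le> f y + L / 2 * (norm (y - z))\<^sup>2"
    using prox_minimizer_exists[OF f_cont f_ge, where c = "L / 2" and x = z] L_pos by auto
  have "E x0 \<ge> Inf (range E)"
    using f_ge L_pos unfolding E_eq by (intro cInf_lower bdd_belowI2[of _ m] prox_INF_ge) auto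
  then have "\<Omega>\<^sub>0 \<subseteq> \<Omega>"
    unfolding \<Omega>_def gam_def using lam_pos L_pos by (intro subset_hull_thickening) simp
  moreover have "closed_segment p z \<subseteq> \<Omega>\<^sub>0"
  proof
    fix w
    assume "w \<in> closed_segment p z"
    then have "E w \<le> E z"
      unfolding E_eq using prox_INF_le_on_segment[OF p f_ge] L_pos by simp
    then show "w \<in> \<Omega>\<^sub>0"
      using z_in unfolding \<Omega>\<^sub>0_def E_def by simp
  qed
  ultimately have seg: "closed_segment p z \<subseteq> \<Omega>"
    by blast
  have "f z \<le> f p + grad p \<bullet> (z - p) + L / 2 * (norm (z - p))\<^sup>2"
    by (rule descent_lemma[OF grad seg Lip_\<Omega>])
  moreover have "grad p \<bullet> (z - p) \<le> f p - m + L / 2 * (norm (z - p))\<^sup>2"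
    using seg by (intro inner_le_by_gradient_bound[OF L_pos gradbd_\<Omega>]) auto
  moreover have "f p + L / 2 * (norm (p - z))\<^sup>2 \<le> f z"
    using p[of z] by simp
  ultimately show ?thesis
    using prox_INF_eq_minimum[OF p] unfolding m_def by (simp add: norm_minus_commute)
qed

end
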